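(* Let $\lambda_1>\lambda_2$ be nonzero real numbers, let $C_1,C_2\in\mathbb{R}$, and set $$q(t)=\frac{C_1}{\lambda_1}\big(e^{\lambda_1 t}-1\big)+\frac{C_2}{\lambda_2}\big(e^{\lambda_2 t}-1\big)+1 .$$ Write $\Theta=C_1\left(-\tfrac{C_2}{C_1}\right)^{\frac{\lambda_1}{\lambda_1-\lambda_2}}\left(\tfrac1{\lambda_1}-\tfrac1{\lambda_2}\right)+1-\tfrac{C_1}{\lambda_1}-\tfrac{C_2}{\lambda_2}$ (defined when $C_1>0>C_2$). Then $q$ vanishes at some $t>0$ if and only if one of the following holds: 1. $\lambda_1>0$ and: (a) $C_1<0$; or (b) $C_1>0$, $C_2<0$, $C_1+C_2<0$, $\Theta\le 0$; or (c) $C_1=0$, $C_2<0$, $\lambda_2>0$; or (d) $C_1=0$, $C_2<\lambda_2$, $\lambda_2<0$. 2. $\lambda_1<0$ and: (a) $C_1>0$, $C_2<0$, $C_1+C_2<0$, $\Theta\le0$; or (b) $C_1<0$, $\tfrac{C_1}{\lambda_1}+\tfrac{C_2}{\lambda_2}>1$; or (c) $C_1=0$, $C_2<0$, $\lambda_2>0$; or (d) $C_1=0$, $C_2<\lambda_2$, $\lambda_2<0$.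
   Context: Consider the extended system $\dot{\mathbf v}=-v_1\mathbf v+Q\mathbf v$, $\mathbf v=(v_1,v_2)$, for a constant real $2\times2$ matrix $Q$; its solution blows up in finite positive time iff the decisive function $q$ (with $q(0)=1$, $\dot q=u_1$, $\dot{\mathbf u}=Q\mathbf u$, $\mathbf u(0)=\mathbf v(0)$, $\mathbf v=\mathbf u/q$) vanishes at some $t>0$. If $AQA^{-1}=\mathrm{diag}(\lambda_1,\lambda_2)$ with $A=(a_{ij})$ nonsingular, then $q$ has exactly the form above with $C_1=\frac{a_{22}}{\det A}(a_{11}v_1(0)+a_{12}v_2(0))$, $C_2=-\frac{a_{12}}{\det A}(a_{21}v_1(0)+a_{22}v_2(0))$; so the claim characterizes finite-time blow-up of the extended system in this case. *)

theory Defs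
  imports Complex_Main
begin

definition decisive_q :: "real \<Rightarrow> real \<Rightarrow> real \<Rightarrow> real \<Rightarrow> real \<Rightarrow> real" where
  "decisive_q l1 l2 C1 C2 t =
     C1 / l1 * (exp (l1 * t) - 1) + C2 / l2 * (exp (l2 * t) - 1) + 1"

text \<open>Theta; only meaningful when C1 > 0 > C2 (then the base of powr is positive).\<close>
definition Theta :: "real \<Rightarrow> real \<Rightarrow> real \<Rightarrow> real \<Rightarrow> real" where
  "Theta l1 l2 C1 C2 =
     C1 * ((- C2 / C1) powr (l1 / (l1 - l2))) * (1 / l1 - 1 / l2) + 1 - C1 / l1 - C2 / l2"

end

theory Submission
  imports Defs "HOL-Real_Asymp.Real_Asymp"
begin

text \<open>
  Since \<open>q 0 = 1\<close> and \<open>q' t = exp (l2 t) (C1 exp ((l1 - l2) t) + C2)\<close>, the derivative changes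
  sign at most once. For \<open>C1 = 0\<close> the equation \<open>q t = 0\<close> is solved explicitly. For \<open>C1 > 0\<close>,
  either \<open>C1 + C2 \<ge> 0\<close> and \<open>q\<close> increases on \<open>[0, \<infinity>)\<close>, or \<open>q\<close> attains its global minimum \<open>\<Theta>\<close>
  at the positive time \<open>ln (- C2 / C1) / (l1 - l2)\<close>. For \<open>C1 < 0\<close> and \<open>l1 > 0\<close> the term
  \<open>C1 / l1 exp (l1 t)\<close> dominates and drives \<open>q\<close> to \<open>-\<infinity>\<close>. For \<open>C1 < 0\<close> and \<open>l1 < 0\<close>,
  \<open>q t = 1 - a u - b v\<close> with \<open>a = C1 / l1 > 0\<close>, \<open>b = C2 / l2\<close> and \<open>0 < u < v < 1\<close>, so \<open>q\<close> has no
  positive zero when \<open>a + b \<le> 1\<close>, whereas for \<open>a + b > 1\<close> its limit \<open>1 - a - b\<close> is negative.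
\<close>

lemma pos_root_of_sign_change:
  fixes f :: "real \<Rightarrow> real"
  assumes "continuous_on {0..t} f" "f 0 > 0" "f t \<le> 0" "0 \<le> t"
  shows "\<exists>x>0. f x = 0"
proof -
  obtain x where "0 \<le> x" "f x = 0"
    using IVT2'[of f t 0 0] assms by auto
  moreover have "x \<noteq> 0" using calculation assms(2) by auto
  ultimately show ?thesis by (intro exI[of _ x]) simp
qed

lemma pos_root_of_eventually_neg:
  fixes f :: "real \<Rightarrow> real"
  assumes "continuous_on {0..} f" "f 0 > 0" "eventually (\<lambda>t. f t < 0) at_top"
  shows "\<exists>x>0. f x = 0"
proof -
  obtain t where "t \<ge> 0" "f t < 0"
    using assms(3) by (metis eventually_at_top_linorder nle_le)
  then show ?thesis
    using pos_root_of_sign_change[of t f] continuous_on_subset[OF assms(1)] assms(2) by auto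
qed

lemma tendsto_exp_mult_at_top_neg:
  fixes l :: real
  assumes "l < 0"
  shows "((\<lambda>t. exp (l * t)) \<longlongrightarrow> 0) at_top"
  using assms by real_asymp

lemma exists_pos_exp_mult_eq_iff:
  fixes l y :: real
  assumes "l \<noteq> 0"
  shows "(\<exists>t>0. exp (l * t) = y) \<longleftrightarrow> (l > 0 \<and> y > 1) \<or> (l < 0 \<and> 0 < y \<and> y < 1)"
proof
  assume "\<exists>t>0. exp (l * t) = y"
  then obtain t where "t > 0" "exp (l * t) = y" by blast
  then show "(l > 0 \<and> y > 1) \<or> (l < 0 \<and> 0 < y \<and> y < 1)"
    using assms by (auto simp: zero_less_mult_iff mult_less_0_iff)
next
  assume y: "(l > 0 \<and> y > 1) \<or> (l < 0 \<and> 0 < y \<and> y < 1)"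
  then have "ln y / l > 0" "exp (l * (ln y / l)) = y"
    using assms by (auto simp: divide_neg_neg)
  then show "\<exists>t>0. exp (l * t) = y" by blast
qed

lemma add_mult_lt_one:
  fixes a b u v :: real
  assumes "a > 0" "a + b \<le> 1" "0 < u" "u < v" "v < 1"
  shows "a * u + b * v < 1"
proof (cases "b \<le> 0")
  case True
  then have "a * u + b * v \<le> (a + b) * u"
    using assms by (simp add: distrib_right mult_left_mono_neg)
  also have "\<dots> \<le> 1 * u"
    using assms by (intro mult_right_mono) auto
  finally show ?thesis using assms by simp
next
  case False
  have "a * u < a * 1" using assms by (intro mult_strict_left_mono) auto
  moreover have "b * v < b * 1" using False assms by (intro mult_strict_left_mono) auto
  ultimately show ?thesis using assms by linarith
qed

lemma add_exp_mult_factor: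
  fixes C1 C2 l1 l2 x :: real
  shows "C1 * exp (l1 * x) + C2 * exp (l2 * x) = exp (l2 * x) * (C1 * exp ((l1 - l2) * x) + C2)"
  by (simp add: algebra_simps flip: exp_add)

lemma decisive_q_0 [simp]: "decisive_q l1 l2 C1 C2 0 = 1"
  by (simp add: decisive_q_def)

lemma continuous_on_decisive_q: "continuous_on S (decisive_q l1 l2 C1 C2)"
  unfolding decisive_q_def[abs_def] by (intro continuous_intros)

lemma has_real_derivative_decisive_q:
  assumes "l1 \<noteq> 0" "l2 \<noteq> 0"
  shows "(decisive_q l1 l2 C1 C2 has_real_derivative
           exp (l2 * t) * (C1 * exp ((l1 - l2) * t) + C2)) (at t)"
proof -
  have "(decisive_q l1 l2 C1 C2 has_real_derivative
          C1 / l1 * (exp (l1 * t) * l1) + C2 / l2 * (exp (l2 * t) * l2)) (at t)"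
    unfolding decisive_q_def[abs_def] by (auto intro!: derivative_eq_intros)
  then show ?thesis
    using assms by (simp add: add_exp_mult_factor)
qed

lemma decisive_q_pos_root_of_nonpos:
  assumes "t \<ge> 0" "decisive_q l1 l2 C1 C2 t \<le> 0"
  shows "\<exists>x>0. decisive_q l1 l2 C1 C2 x = 0"
  using pos_root_of_sign_change[OF continuous_on_decisive_q] assms by simp

lemma decisive_q_pos_root_of_eventually_neg:
  assumes "eventually (\<lambda>t. decisive_q l1 l2 C1 C2 t < 0) at_top"
  shows "\<exists>x>0. decisive_q l1 l2 C1 C2 x = 0"
  using pos_root_of_eventually_neg[OF continuous_on_decisive_q] assms by simp

lemma decisive_q_C1_zero_pos_root_iff:
  assumes "l2 \<noteq> 0"
  shows "(\<exists>t>0. decisive_q l1 l2 0 C2 t = 0) \<longleftrightarrow> (C2 < 0 \<and> l2 > 0) \<or> (C2 < l2 \<and> l2 < 0)"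
proof -
  define b where "b = C2 / l2"
  have "decisive_q l1 l2 0 C2 t = 0 \<longleftrightarrow> b \<noteq> 0 \<and> exp (l2 * t) = 1 - 1 / b" for t
    by (cases "b = 0") (auto simp: decisive_q_def b_def[symmetric] field_simps)
  then have "(\<exists>t>0. decisive_q l1 l2 0 C2 t = 0) \<longleftrightarrow>
               b \<noteq> 0 \<and> ((l2 > 0 \<and> 1 - 1 / b > 1) \<or> (l2 < 0 \<and> 0 < 1 - 1 / b \<and> 1 - 1 / b < 1))"
    using exists_pos_exp_mult_eq_iff[OF assms, of "1 - 1 / b"] by auto
  also have "\<dots> \<longleftrightarrow> (b < 0 \<and> l2 > 0) \<or> (b > 1 \<and> l2 < 0)"
    by (auto simp: field_simps)
  also have "\<dots> \<longleftrightarrow> (C2 < 0 \<and> l2 > 0) \<or> (C2 < l2 \<and> l2 < 0)"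
    using assms by (auto simp: b_def field_simps)
  finally show ?thesis .
qed

lemma decisive_q_ge_one:
  assumes "l2 \<le> l1" "l1 \<noteq> 0" "l2 \<noteq> 0" "C1 \<ge> 0" "C1 + C2 \<ge> 0" "t \<ge> 0"
  shows "decisive_q l1 l2 C1 C2 t \<ge> 1"
proof -
  have "exp (l2 * x) * (C1 * exp ((l1 - l2) * x) + C2) \<ge> 0" if "x \<ge> 0" for x
  proof -
    have "C1 * 1 \<le> C1 * exp ((l1 - l2) * x)"
      using assms that by (intro mult_left_mono) auto
    then show ?thesis using assms by simp
  qed
  then show ?thesis
    using DERIV_nonneg_imp_nondecreasing[of 0 t "decisive_q l1 l2 C1 C2"]
      has_real_derivative_decisive_q[OF assms(2,3)] assms(6) by fastforce
qed

text \<open>The unique zero of the derivative of \<open>q\<close>, for \<open>C1 > 0 > C2\<close>.\<close>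

definition critical_time :: "real \<Rightarrow> real \<Rightarrow> real \<Rightarrow> real \<Rightarrow> real" where
  "critical_time l1 l2 C1 C2 = ln (- C2 / C1) / (l1 - l2)"

lemma exp_critical_time:
  assumes "l1 \<noteq> l2" "C1 > 0" "C2 < 0"
  shows "exp ((l1 - l2) * critical_time l1 l2 C1 C2) = - C2 / C1"
  using assms by (simp add: critical_time_def divide_neg_pos)

lemma critical_time_pos_iff:
  assumes "l2 < l1" "C1 > 0" "C2 < 0"
  shows "critical_time l1 l2 C1 C2 > 0 \<longleftrightarrow> C1 + C2 < 0"
  using assms by (auto simp: critical_time_def field_simps)

lemma decisive_q_ge_critical_value:
  assumes "l2 < l1" "l1 \<noteq> 0" "l2 \<noteq> 0" "C1 > 0" "C2 < 0"
  shows "decisive_q l1 l2 C1 C2 (critical_time l1 l2 C1 C2) \<le> decisive_q l1 l2 C1 C2 t"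
proof -
  let ?ts = "critical_time l1 l2 C1 C2"
  let ?q = "decisive_q l1 l2 C1 C2"
  have factor: "C1 * exp ((l1 - l2) * x) + C2 = C1 * (exp ((l1 - l2) * x) - exp ((l1 - l2) * ?ts))" for x
    using exp_critical_time[of l1 l2 C1 C2] assms by (simp add: field_simps)
  have mono: "exp ((l1 - l2) * x) \<le> exp ((l1 - l2) * y) \<longleftrightarrow> x \<le> y" for x y
    using assms by simp
  have nonpos: "exp (l2 * x) * (C1 * exp ((l1 - l2) * x) + C2) \<le> 0" if "x \<le> ?ts" for x
    using mono[of x ?ts] assms that by (simp add: factor mult_le_0_iff)
  have nonneg: "exp (l2 * x) * (C1 * exp ((l1 - l2) * x) + C2) \<ge> 0" if "?ts \<le> x" for x
    using mono[of ?ts x] assms that by (simp add: factor zero_le_mult_iff)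
  note deriv = has_real_derivative_decisive_q[OF assms(2,3), of C1 C2]
  show ?thesis
  proof (cases "t \<le> ?ts")
    case True
    then show ?thesis
      using DERIV_nonpos_imp_nonincreasing[of t ?ts ?q] deriv nonpos by blast
  next
    case False
    then show ?thesis
      using DERIV_nonneg_imp_nondecreasing[of ?ts t ?q] deriv nonneg by force
  qed
qed

lemma decisive_q_critical_time:
  assumes "l1 \<noteq> l2" "l1 \<noteq> 0" "l2 \<noteq> 0" "C1 > 0" "C2 < 0"
  shows "decisive_q l1 l2 C1 C2 (critical_time l1 l2 C1 C2) = Theta l1 l2 C1 C2"
proof -
  define r where "r = - C2 / C1"
  define P where "P = r powr (l1 / (l1 - l2))"
  have r: "r > 0" "C2 = - C1 * r" using assms by (auto simp: r_def divide_neg_pos)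
  have ts: "critical_time l1 l2 C1 C2 = ln r / (l1 - l2)"
    by (simp add: critical_time_def r_def)
  have e1: "exp (l1 * critical_time l1 l2 C1 C2) = P"
    unfolding ts P_def powr_def using r by simp
  have "l2 / (l1 - l2) = l1 / (l1 - l2) - 1"
    using assms by (simp add: field_simps)
  then have "r powr (l2 / (l1 - l2)) = P / r"
    using r by (simp add: P_def powr_diff)
  then have e2: "exp (l2 * critical_time l1 l2 C1 C2) = P / r"
    unfolding ts powr_def using r by simp
  have "C2 / l2 * (P / r) = - C1 * P / l2"
    using r by simp
  then have "decisive_q l1 l2 C1 C2 (critical_time l1 l2 C1 C2) =
               C1 / l1 * (P - 1) - C1 * P / l2 - C2 / l2 + 1"
    by (simp add: decisive_q_def e1 e2 right_diff_distrib)
  also have "\<dots> = Theta l1 l2 C1 C2"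
    by (simp add: Theta_def P_def r_def algebra_simps)
  finally show ?thesis .
qed

lemma decisive_q_C1_pos_pos_root_iff:
  assumes "l2 < l1" "l1 \<noteq> 0" "l2 \<noteq> 0" "C1 > 0"
  shows "(\<exists>t>0. decisive_q l1 l2 C1 C2 t = 0) \<longleftrightarrow> C2 < 0 \<and> C1 + C2 < 0 \<and> Theta l1 l2 C1 C2 \<le> 0"
proof (cases "C2 < 0 \<and> C1 + C2 < 0")
  case True
  let ?ts = "critical_time l1 l2 C1 C2"
  have "?ts > 0"
    using True assms critical_time_pos_iff by blast
  have q_ts: "decisive_q l1 l2 C1 C2 ?ts = Theta l1 l2 C1 C2"
    using True assms by (intro decisive_q_critical_time) auto
  have "(\<exists>t>0. decisive_q l1 l2 C1 C2 t = 0) \<longleftrightarrow> Theta l1 l2 C1 C2 \<le> 0"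
  proof
    assume "\<exists>t>0. decisive_q l1 l2 C1 C2 t = 0"
    then obtain t where "decisive_q l1 l2 C1 C2 t = 0" by blast
    then show "Theta l1 l2 C1 C2 \<le> 0"
      using True assms decisive_q_ge_critical_value[of l2 l1 C1 C2 t] q_ts by simp
  next
    assume "Theta l1 l2 C1 C2 \<le> 0"
    then show "\<exists>t>0. decisive_q l1 l2 C1 C2 t = 0"
      using \<open>?ts > 0\<close> q_ts by (intro decisive_q_pos_root_of_nonpos[of ?ts]) auto
  qed
  then show ?thesis using True by blast
next
  case False
  then have "C1 + C2 \<ge> 0" using assms(4) by linarith
  then have "decisive_q l1 l2 C1 C2 t \<ge> 1" if "t > 0" for t
    using assms that by (intro decisive_q_ge_one) auto
  then show ?thesis using False by force
qed

lemma decisive_q_mult_exp: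
  shows "decisive_q l1 l2 C1 C2 t * exp (- l1 * t) =
           C1 / l1 + C2 / l2 * exp ((l2 - l1) * t) + (1 - C1 / l1 - C2 / l2) * exp (- l1 * t)"
  by (simp add: decisive_q_def algebra_simps flip: exp_add)

lemma decisive_q_C1_neg_pos_root:
  assumes "l2 < l1" "l1 > 0" "l2 \<noteq> 0" "C1 < 0"
  shows "\<exists>t>0. decisive_q l1 l2 C1 C2 t = 0"
proof -
  have "((\<lambda>t. decisive_q l1 l2 C1 C2 t * exp (- l1 * t)) \<longlongrightarrow> C1 / l1 + C2 / l2 * 0 + (1 - C1 / l1 - C2 / l2) * 0) at_top"
    unfolding decisive_q_mult_exp
    using assms by (intro tendsto_intros tendsto_exp_mult_at_top_neg) auto
  moreover have "C1 / l1 < 0" using assms by (simp add: divide_neg_pos)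
  ultimately have "eventually (\<lambda>t. decisive_q l1 l2 C1 C2 t * exp (- l1 * t) < 0) at_top"
    by (intro order_tendstoD(2)) auto
  then have "eventually (\<lambda>t. decisive_q l1 l2 C1 C2 t < 0) at_top"
    by eventually_elim (simp add: mult_less_0_iff)
  then show ?thesis by (rule decisive_q_pos_root_of_eventually_neg)
qed

lemma decisive_q_C1_neg_pos_root_iff:
  assumes "l2 < l1" "l1 < 0" "C1 < 0"
  shows "(\<exists>t>0. decisive_q l1 l2 C1 C2 t = 0) \<longleftrightarrow> C1 / l1 + C2 / l2 > 1"
proof
  assume "\<exists>t>0. decisive_q l1 l2 C1 C2 t = 0"
  then obtain t where t: "t > 0" "decisive_q l1 l2 C1 C2 t = 0" by blast
  have "C1 / l1 * (1 - exp (l1 * t)) + C2 / l2 * (1 - exp (l2 * t)) = 1"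
    using t by (simp add: decisive_q_def algebra_simps)
  moreover have "0 < 1 - exp (l1 * t)" "1 - exp (l1 * t) < 1 - exp (l2 * t)" "C1 / l1 > 0"
    using t assms by (auto simp: mult_neg_pos divide_neg_neg)
  ultimately show "C1 / l1 + C2 / l2 > 1"
    using add_mult_lt_one[of "C1 / l1" "C2 / l2" "1 - exp (l1 * t)" "1 - exp (l2 * t)"]
    by fastforce
next
  assume H: "C1 / l1 + C2 / l2 > 1"
  have "(decisive_q l1 l2 C1 C2 \<longlongrightarrow> C1 / l1 * (0 - 1) + C2 / l2 * (0 - 1) + 1) at_top"
    unfolding decisive_q_def[abs_def] using assms
    by (intro tendsto_intros tendsto_exp_mult_at_top_neg) auto
  then have "eventually (\<lambda>t. decisive_q l1 l2 C1 C2 t < 0) at_top"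
    using H by (intro order_tendstoD(2)) auto
  then show "\<exists>t>0. decisive_q l1 l2 C1 C2 t = 0" by (rule decisive_q_pos_root_of_eventually_neg)
qed

theorem mainTheorem2:
  fixes l1 l2 C1 C2 :: real
  assumes "l1 > l2" and "l1 \<noteq> 0" and "l2 \<noteq> 0"
  shows "(\<exists>t>0. decisive_q l1 l2 C1 C2 t = 0) \<longleftrightarrow>
    ((l1 > 0 \<and>
        (C1 < 0
       \<or> (C1 > 0 \<and> C2 < 0 \<and> C1 + C2 < 0 \<and> Theta l1 l2 C1 C2 \<le> 0)
       \<or> (C1 = 0 \<and> C2 < 0 \<and> l2 > 0)
       \<or> (C1 = 0 \<and> C2 < l2 \<and> l2 < 0)))
   \<or> (l1 < 0 \<and>
        ((C1 > 0 \<and> C2 < 0 \<and> C1 + C2 < 0 \<and> Theta l1 l2 C1 C2 \<le> 0)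
       \<or> (C1 < 0 \<and> C1 / l1 + C2 / l2 > 1)
       \<or> (C1 = 0 \<and> C2 < 0 \<and> l2 > 0)
       \<or> (C1 = 0 \<and> C2 < l2 \<and> l2 < 0))))"
proof (cases C1 "0::real" rule: linorder_cases)
  case less
  then show ?thesis
    using assms decisive_q_C1_neg_pos_root[of l2 l1 C1 C2] decisive_q_C1_neg_pos_root_iff[of l2 l1 C1 C2]
    by (cases "l1 > 0") auto
next
  case equal
  then show ?thesis using assms decisive_q_C1_zero_pos_root_iff[of l2 l1 C2] by auto
next
  case greater
  then show ?thesis using assms decisive_q_C1_pos_pos_root_iff[of l2 l1 C1 C2] by auto
qed

end
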